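(* Let $A=(A,\wedge,\vee,\cdot,\to,1)$ be a $\mathsf{DLCMI}$ whose lattice reduct has a least element $0$, let $n$ be a natural number, and let $\gamma:A\to A$ be a function. Then $\gamma$ satisfies, for all $a,b\in A$, (g1) $a\vee\neg(\gamma(a))^n\le\gamma(a)$ and (g2) $\gamma(a)\le a\vee\neg b^n\vee b$ (equivalently, $\gamma(a)=\min\{b\in A: a\vee\neg b^n\le b\}$ for all $a$), if and only if $\gamma$ satisfies, for all $a,b\in A$, (g3) $\neg(\gamma(0))^n\le\gamma(0)$, (g4) $\gamma(0)\le b\vee\neg b^n$, and (g5) $\gamma(a)=a\vee\gamma(0)$. In particular such a function $\gamma$ is a polynomial function on $A$.
   Context: An algebra $(A,\wedge,\vee,\cdot,\to,1)$ of type $(2,2,2,2,0)$ is a $\mathsf{DLCMI}$ if for all $a,b,c\in A$: (1) $(A,\wedge,\vee)$ is a distributive lattice; (2) $1$ is its largest element; (3) $(A,\cdot,1)$ is a commutative monoid; (4) $(a\to b)\wedge(a\to c)=a\to(b\wedge c)$; (5) $(a\to c)\wedge(b\to c)=(a\vee b)\to c$; (6) $a\to a=1$; (7) $(a\vee b)\cdot c=(a\cdot c)\vee(b\cdot c)$; (8) $(a\to b)\cdot(b\to c)\le a\to c$; (9) $a\to b\le (a\cdot c)\to(b\cdot c)$. Notation: $\neg x=x\to 0$; $x^0=1$, $x^m=x\cdot x^{m-1}$. *)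

theory Defs
  imports Main
begin

definition DLCMI :: "('a::distrib_lattice \<Rightarrow> 'a \<Rightarrow> 'a) \<Rightarrow> ('a \<Rightarrow> 'a \<Rightarrow> 'a) \<Rightarrow> 'a \<Rightarrow> bool" where
  "DLCMI mult imp one \<longleftrightarrow>
     (\<forall>a. a \<le> one) \<and>
     (\<forall>a b c. mult (mult a b) c = mult a (mult b c)) \<and>
     (\<forall>a b. mult a b = mult b a) \<and>
     (\<forall>a. mult a one = a) \<and>
     (\<forall>a b c. inf (imp a b) (imp a c) = imp a (inf b c)) \<and>
     (\<forall>a b c. inf (imp a c) (imp b c) = imp (sup a b) c) \<and>
     (\<forall>a. imp a a = one) \<and>
     (\<forall>a b c. mult (sup a b) c = sup (mult a c) (mult b c)) \<and>
     (\<forall>a b c. mult (imp a b) (imp b c) \<le> imp a c) \<and>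
     (\<forall>a b c. imp a b \<le> imp (mult a c) (mult b c))"

fun mpow :: "('a \<Rightarrow> 'a \<Rightarrow> 'a) \<Rightarrow> 'a \<Rightarrow> 'a \<Rightarrow> nat \<Rightarrow> 'a" where
  "mpow mult one x 0 = one"
| "mpow mult one x (Suc m) = mult x (mpow mult one x m)"

end

theory Submission
  imports Defs
begin

text \<open>Only the antitonicity of \<open>N b = \<not>b\<^sup>n\<close> matters. Taking \<open>b = \<gamma>(0)\<close> in (g2)
  and using (g3) gives \<open>\<gamma>(a) \<le> a \<squnion> \<gamma>(0)\<close>, while (g2) at \<open>a = 0\<close>, \<open>b = \<gamma>(a)\<close>
  together with (g1) gives \<open>\<gamma>(0) \<le> \<gamma>(a)\<close>. Conversely, for \<open>\<gamma>(a) = a \<squnion> \<gamma>(0)\<close>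
  antitonicity yields \<open>N(\<gamma>(a)) \<le> N(\<gamma>(0)) \<le> \<gamma>(0)\<close>, and (g2) follows from (g4).\<close>

lemma DLCMI_mult_mono_left:
  assumes "DLCMI mult imp one" "b \<le> c"
  shows "mult b x \<le> mult c x"
proof -
  have "mult (sup b c) x = sup (mult b x) (mult c x)"
    using assms(1) unfolding DLCMI_def by blast
  then show ?thesis using assms(2) by (metis sup.cobounded1 sup_absorb2)
qed

lemma DLCMI_mpow_mono:
  assumes "DLCMI mult imp one" "b \<le> c"
  shows "mpow mult one b n \<le> mpow mult one c n"
proof (induction n)
  case 0
  then show ?case by simp
next
  case (Suc n)
  have comm: "\<And>x y. mult x y = mult y x" using assms(1) unfolding DLCMI_def by blast
  have "mult b (mpow mult one b n) \<le> mult c (mpow mult one b n)"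
    using DLCMI_mult_mono_left[OF assms] .
  also have "\<dots> \<le> mult c (mpow mult one c n)"
    using DLCMI_mult_mono_left[OF assms(1) Suc.IH] comm by metis
  finally show ?case by simp
qed

lemma DLCMI_imp_antimono_left:
  assumes "DLCMI mult imp one" "b \<le> c"
  shows "imp c x \<le> imp b x"
proof -
  have "inf (imp b x) (imp c x) = imp (sup b c) x"
    using assms(1) unfolding DLCMI_def by blast
  then show ?thesis using assms(2) by (metis inf.cobounded1 sup_absorb2)
qed

lemma DLCMI_antimono_neg_mpow:
  assumes "DLCMI mult imp one"
  shows "antimono (\<lambda>b. imp (mpow mult one b n) bot)"
  by (rule antimonoI) (use DLCMI_imp_antimono_left[OF assms] DLCMI_mpow_mono[OF assms] in blast)

lemma least_closure_sup_bot:
  fixes N \<gamma> :: "'a::bounded_lattice \<Rightarrow> 'a"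
  assumes "\<forall>a b. sup a (N (\<gamma> a)) \<le> \<gamma> a \<and> \<gamma> a \<le> sup (sup a (N b)) b"
  shows "N (\<gamma> bot) \<le> \<gamma> bot \<and> (\<forall>b. \<gamma> bot \<le> sup b (N b)) \<and> (\<forall>a. \<gamma> a = sup a (\<gamma> bot))"
proof (intro conjI allI)
  have closed: "a \<le> \<gamma> a" "N (\<gamma> a) \<le> \<gamma> a" for a
    using assms by simp_all
  have least: "\<gamma> a \<le> sup (sup a (N b)) b" for a b
    using assms by blast
  show "N (\<gamma> bot) \<le> \<gamma> bot" by (fact closed(2))
  show "\<gamma> bot \<le> sup b (N b)" for b
    using least[of bot b] by (simp add: sup_commute)
  show "\<gamma> a = sup a (\<gamma> bot)" for a
  proof (rule order.antisym)
    have "\<gamma> a \<le> sup (sup a (N (\<gamma> bot))) (\<gamma> bot)" by (fact least)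
    also have "\<dots> = sup a (\<gamma> bot)"
      using closed(2)[of bot] by (simp add: sup_assoc sup_absorb2)
    finally show "\<gamma> a \<le> sup a (\<gamma> bot)" .
    have "\<gamma> bot \<le> sup (N (\<gamma> a)) (\<gamma> a)"
      using least[of bot "\<gamma> a"] by simp
    then have "\<gamma> bot \<le> \<gamma> a"
      using closed(2)[of a] by (simp add: sup_absorb2)
    then show "sup a (\<gamma> bot) \<le> \<gamma> a"
      using closed(1)[of a] by simp
  qed
qed

lemma sup_bot_least_closure:
  fixes N \<gamma> :: "'a::bounded_lattice \<Rightarrow> 'a"
  assumes "antimono N"
    and fixed: "N (\<gamma> bot) \<le> \<gamma> bot"
    and below: "\<forall>b. \<gamma> bot \<le> sup b (N b)"
    and translate: "\<forall>a. \<gamma> a = sup a (\<gamma> bot)"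
  shows "\<forall>a b. sup a (N (\<gamma> a)) \<le> \<gamma> a \<and> \<gamma> a \<le> sup (sup a (N b)) b"
proof (intro allI conjI)
  fix a b
  have \<gamma>a: "\<gamma> a = sup a (\<gamma> bot)"
    using translate by blast
  have "N (\<gamma> a) \<le> N (\<gamma> bot)"
    using antimonoD[OF assms(1)] \<gamma>a by simp
  also have "\<dots> \<le> \<gamma> bot" by (fact fixed)
  finally show "sup a (N (\<gamma> a)) \<le> \<gamma> a"
    unfolding \<gamma>a by (simp add: le_supI2)
  have "\<gamma> bot \<le> sup b (N b)"
    using below by blast
  then show "\<gamma> a \<le> sup (sup a (N b)) b"
    unfolding \<gamma>a by (simp add: le_supI2 sup_commute sup_left_commute)
qed

theorem lemma4p11:
  fixes mult imp :: "'a::{distrib_lattice, bounded_lattice} \<Rightarrow> 'a \<Rightarrow> 'a"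
    and one :: 'a and n :: nat and \<gamma> :: "'a \<Rightarrow> 'a"
  assumes "DLCMI mult imp one"
  shows "(\<forall>a b. sup a (imp (mpow mult one (\<gamma> a) n) bot) \<le> \<gamma> a
              \<and> \<gamma> a \<le> sup (sup a (imp (mpow mult one b n) bot)) b)
     \<longleftrightarrow>
         (imp (mpow mult one (\<gamma> bot) n) bot \<le> \<gamma> bot
          \<and> (\<forall>b. \<gamma> bot \<le> sup b (imp (mpow mult one b n) bot))
          \<and> (\<forall>a. \<gamma> a = sup a (\<gamma> bot)))"
  (is "?L \<longleftrightarrow> ?R")
proof
  show "?R" if "?L" using least_closure_sup_bot[OF that] .
  show "?L" if "?R"
    using that by (intro sup_bot_least_closure[OF DLCMI_antimono_neg_mpow[OF assms]]) blast+
qed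

end
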